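(* (i) The first-order supertransvectant $J^{\lambda,\mu}_1$, i.e. the bracket $[f,g]=\mu\,f'\,g-\lambda\,f\,g'-(-1)^{\sigma(f)}\,\tfrac{1}{2}\,\overline{D}(f)\,\overline{D}(g)$, corresponds to the Poisson bracket on $\mathbb{R}^{2|1}$: $$F_{[f,g]}=\frac{1}{2}\,\{F_f,F_g\}.$$ (ii) The supertransvectant of order $\tfrac12$, i.e. the odd bracket $(f,g)=\mu\,\overline{D}(f)\,g-(-1)^{\sigma(f)}\,\lambda\,f\,\overline{D}(g)$, corresponds to the ghost Poisson bracket: $$F_{(f,g)}=-\frac{1}{2}\,\{F_f,F_g\}_{\rm gPb}.$$
   Context: The supercircle $S^{1|1}$ has function algebra $C^\infty_{\mathbb{C}}(S^1)[\xi]$ with $\xi$ odd, $\xi^2=0$; functions are $f(x,\xi)=f_0(x)+\xi f_1(x)$, with parity $\sigma(f_0)=0$, $\sigma(\xi f_1)=1$. For $\lambda\in\mathbb{C}$, $\mathcal{F}_\lambda$ denotes this space of functions regarded as $\lambda$-densities (with the $\mathrm{OSp}(1|2)$ fraction-linear action of weight $\lambda$). Let $\overline{D}=\frac{\partial}{\partial\xi}-\xi\frac{\partial}{\partial x}$ and $f'=\partial f/\partial x$. Take $f\in\mathcal{F}_\lambda$, $g\in\mathcal{F}_\mu$. On $\mathbb{R}^{2|1}$ with coordinates $(p,q,\tau)$ ($\tau$ odd), the Poisson bracket is $\{F,G\}=\frac{\partial F}{\partial p}\frac{\partial G}{\partial q}-\frac{\partial F}{\partial q}\frac{\partial G}{\partial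 p}+\frac{\partial F}{\partial \tau}\frac{\partial G}{\partial \tau}$, the Euler field is $\mathcal{E}=p\frac{\partial}{\partial p}+q\frac{\partial}{\partial q}+\tau\frac{\partial}{\partial \tau}$, and the ghost Poisson bracket is $\{F,G\}_{\rm gPb}=\frac{\partial F}{\partial \tau}\,\mathcal{E}(G)-(-1)^{\sigma(F)}\,\mathcal{E}(F)\,\frac{\partial G}{\partial \tau}+\tau\left(\frac{\partial F}{\partial p}\frac{\partial G}{\partial q}-\frac{\partial F}{\partial q}\frac{\partial G}{\partial p}\right)$. The symplectic lifting associates to $f\in\mathcal{F}_\lambda$ the function homogeneous of degree $-2\lambda$ on $\mathbb{R}^{2|1}$ $$F_f(p,q,\tau)=p^{-2\lambda}f\!\left(\tfrac{q}{p},\tfrac{\tau}{p}\right)=p^{-2\lambda}f_0\!\left(\tfrac{q}{p}\right)+\tau\,p^{-2\lambda-1}f_1\!\left(\tfrac{q}{p}\right).$$ Note that $[f,g]\in\mathcal{F}_{\lambda+\mu+1}$ and $(f,g)\in\mathcal{F}_{\lambda+\mu+\frac12}$. *)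

theory Defs
  imports "HOL-Analysis.Analysis"
begin

text \<open>Superfunctions on the supercircle S^{1|1}: f(x,xi) = f0(x) + xi f1(x), represented by
  the pair (f0, f1) of complex-valued functions of the real coordinate x
  (functions on S^1 = R / 2 pi Z are viewed as 2pi-periodic functions on R).\<close>
type_synonym sfun = "(real \<Rightarrow> complex) \<times> (real \<Rightarrow> complex)"

text \<open>Functions on R^{2|1}: F(p,q,tau) = A(p,q) + tau B(p,q), represented by the pair (A, B).\<close>
type_synonym sfun3 = "(real \<Rightarrow> real \<Rightarrow> complex) \<times> (real \<Rightarrow> real \<Rightarrow> complex)"

definition smooth_fun :: "(real \<Rightarrow> complex) \<Rightarrow> bool" where
  "smooth_fun h \<longleftrightarrow> (\<exists>D. D 0 = h \<and> (\<forall>n x. (D n has_vector_derivative D (Suc n) x) (at x)))"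

definition circle_fun :: "(real \<Rightarrow> complex) \<Rightarrow> bool" where
  "circle_fun h \<longleftrightarrow> smooth_fun h \<and> (\<forall>x. h (x + 2 * pi) = h x)"

definition on_S11 :: "sfun \<Rightarrow> bool" where
  "on_S11 f \<longleftrightarrow> circle_fun (fst f) \<and> circle_fun (snd f)"

definition homogeneous :: "sfun \<Rightarrow> nat \<Rightarrow> bool" where
  "homogeneous f s \<longleftrightarrow> (s = 0 \<and> snd f = (\<lambda>x. 0)) \<or> (s = 1 \<and> fst f = (\<lambda>x. 0))"

definition sadd :: "sfun \<Rightarrow> sfun \<Rightarrow> sfun" where
  "sadd f g = (\<lambda>x. fst f x + fst g x, \<lambda>x. snd f x + snd g x)"

definition sscale :: "complex \<Rightarrow> sfun \<Rightarrow> sfun" where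
  "sscale c f = (\<lambda>x. c * fst f x, \<lambda>x. c * snd f x)"

text \<open>(f0 + xi f1)(g0 + xi g1) = f0 g0 + xi (f1 g0 + f0 g1)\<close>
definition smult :: "sfun \<Rightarrow> sfun \<Rightarrow> sfun" where
  "smult f g = (\<lambda>x. fst f x * fst g x, \<lambda>x. snd f x * fst g x + fst f x * snd g x)"

definition sdx :: "sfun \<Rightarrow> sfun" where
  "sdx f = (\<lambda>x. vector_derivative (fst f) (at x), \<lambda>x. vector_derivative (snd f) (at x))"

text \<open>Dbar = d/dxi - xi d/dx, so Dbar(f0 + xi f1) = f1 - xi f0'.\<close>
definition Dbar :: "sfun \<Rightarrow> sfun" where
  "Dbar f = (snd f, \<lambda>x. - vector_derivative (fst f) (at x))"

definition sbracket :: "complex \<Rightarrow> complex \<Rightarrow> nat \<Rightarrow> sfun \<Rightarrow> sfun \<Rightarrow> sfun" where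
  "sbracket lam mu s f g =
     sadd (sadd (sscale mu (smult (sdx f) g)) (sscale (- lam) (smult f (sdx g))))
          (sscale (- ((-1) ^ s / 2)) (smult (Dbar f) (Dbar g)))"

definition sbracket_half :: "complex \<Rightarrow> complex \<Rightarrow> nat \<Rightarrow> sfun \<Rightarrow> sfun \<Rightarrow> sfun" where
  "sbracket_half lam mu s f g =
     sadd (sscale mu (smult (Dbar f) g)) (sscale (- ((-1) ^ s * lam)) (smult f (Dbar g)))"

definition sadd3 :: "sfun3 \<Rightarrow> sfun3 \<Rightarrow> sfun3" where
  "sadd3 F G = (\<lambda>p q. fst F p q + fst G p q, \<lambda>p q. snd F p q + snd G p q)"

definition sscale3 :: "complex \<Rightarrow> sfun3 \<Rightarrow> sfun3" where
  "sscale3 c F = (\<lambda>p q. c * fst F p q, \<lambda>p q. c * snd F p q)"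

text \<open>(A + tau B)(C + tau E) = A C + tau (B C + A E)\<close>
definition smult3 :: "sfun3 \<Rightarrow> sfun3 \<Rightarrow> sfun3" where
  "smult3 F G = (\<lambda>p q. fst F p q * fst G p q, \<lambda>p q. snd F p q * fst G p q + fst F p q * snd G p q)"

definition dp :: "sfun3 \<Rightarrow> sfun3" where
  "dp F = (\<lambda>p q. vector_derivative (\<lambda>t. fst F t q) (at p),
           \<lambda>p q. vector_derivative (\<lambda>t. snd F t q) (at p))"

definition dq :: "sfun3 \<Rightarrow> sfun3" where
  "dq F = (\<lambda>p q. vector_derivative (\<lambda>t. fst F p t) (at q),
           \<lambda>p q. vector_derivative (\<lambda>t. snd F p t) (at q))"

definition dtau :: "sfun3 \<Rightarrow> sfun3" where
  "dtau F = (snd F, \<lambda>p q. 0)"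

definition tau_mult :: "sfun3 \<Rightarrow> sfun3" where
  "tau_mult F = (\<lambda>p q. 0, fst F)"

text \<open>Euler field E = p d/dp + q d/dq + tau d/dtau\<close>
definition euler :: "sfun3 \<Rightarrow> sfun3" where
  "euler F = (\<lambda>p q. of_real p * fst (dp F) p q + of_real q * fst (dq F) p q,
              \<lambda>p q. of_real p * snd (dp F) p q + of_real q * snd (dq F) p q + snd F p q)"

definition poisson :: "sfun3 \<Rightarrow> sfun3 \<Rightarrow> sfun3" where
  "poisson F G =
     sadd3 (sadd3 (smult3 (dp F) (dq G)) (sscale3 (-1) (smult3 (dq F) (dp G))))
           (smult3 (dtau F) (dtau G))"

text \<open>Ghost Poisson bracket; s is the parity sigma(F) of F.\<close>
definition ghost_poisson :: "nat \<Rightarrow> sfun3 \<Rightarrow> sfun3 \<Rightarrow> sfun3" where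
  "ghost_poisson s F G =
     sadd3 (sadd3 (smult3 (dtau F) (euler G)) (sscale3 (- ((-1) ^ s)) (smult3 (euler F) (dtau G))))
           (tau_mult (sadd3 (smult3 (dp F) (dq G)) (sscale3 (-1) (smult3 (dq F) (dp G)))))"

text \<open>Symplectic lifting of a lam-density f: F_f(p,q,tau) = p^(-2 lam) f(q/p, tau/p)
  = p^(-2 lam) f0(q/p) + tau p^(-2 lam - 1) f1(q/p)  (considered for p > 0).\<close>
definition lift :: "complex \<Rightarrow> sfun \<Rightarrow> sfun3" where
  "lift lam f = (\<lambda>p q. (of_real p) powr (- 2 * lam) * fst f (q / p),
                 \<lambda>p q. (of_real p) powr (- 2 * lam - 1) * snd f (q / p))"

definition at_point :: "sfun3 \<Rightarrow> real \<Rightarrow> real \<Rightarrow> complex \<times> complex" where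
  "at_point F p q = (fst F p q, snd F p q)"

end

theory Submission
  imports Defs
begin

text \<open>The lift of a \<open>\<lambda>\<close>-density is homogeneous of degree \<open>-2\<lambda>\<close>, so by the chain rule its
  partial derivatives in \<open>p\<close> and \<open>q\<close> are again of the form \<open>p\<^sup>c h(q/p)\<close> with \<open>h\<close> built from
  \<open>f\<close> and \<open>f'\<close>, and the Euler field acts on it as multiplication by \<open>-2\<lambda>\<close>. After
  substituting these formulas, both sides of each identity are \<open>p\<^sup>-\<^sup>2\<^sup>\<lambda> p\<^sup>-\<^sup>2\<^sup>\<mu>\<close> times the
  same rational expression in \<open>p\<close> and the values of \<open>f, f', g, g'\<close> at \<open>q/p\<close>.\<close>

lemma has_vector_derivative_of_real_powr:
  assumes "p > 0"
  shows "((\<lambda>t. complex_of_real t powr c) has_vector_derivative c * complex_of_real p powr (c - 1)) (at p)"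
proof -
  have "complex_of_real p \<notin> \<real>\<^sub>\<le>\<^sub>0"
    using assms by (auto simp: nonpos_Reals_def)
  then show ?thesis
    by (rule has_vector_derivative_real_field[OF has_field_derivative_powr])
qed

lemma of_real_powr_diff_one:
  "p > 0 \<Longrightarrow> complex_of_real p powr (c - 1) = complex_of_real p powr c / complex_of_real p"
  by (simp add: powr_diff)

lemma of_real_powr_diff_numeral:
  "p > 0 \<Longrightarrow> complex_of_real p powr (c - numeral n) = complex_of_real p powr c / complex_of_real p ^ numeral n"
  by (simp add: powr_diff)

lemma of_real_powr_weight_add:
  assumes "p > 0"
  shows "complex_of_real p powr (- 2 * (lam + mu + k))
       = complex_of_real p powr (- 2 * lam) * complex_of_real p powr (- 2 * mu) / complex_of_real p powr (2 * k)"
proof -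
  have "- 2 * (lam + mu + k) = - 2 * lam + - 2 * mu - 2 * k"
    by (simp add: algebra_simps)
  then show ?thesis
    by (simp only: powr_add powr_diff)
qed

lemma vector_derivative_homogeneous_wrt_p:
  assumes h: "h differentiable at (q / p)" and p: "p > 0"
  shows "vector_derivative (\<lambda>t. complex_of_real t powr c * h (q / t)) (at p)
       = complex_of_real p powr (c - 1) * (c * h (q / p) - complex_of_real (q / p) * vector_derivative h (at (q / p)))"
proof -
  have "((\<lambda>t. q / t) has_real_derivative - q / p^2) (at p)"
    using p by (auto intro!: derivative_eq_intros simp: power2_eq_square)
  then have "((h \<circ> (\<lambda>t. q / t)) has_vector_derivative (- q / p^2) *\<^sub>R vector_derivative h (at (q / p))) (at p)"
    by (intro vector_diff_chain_at vector_derivative_works[THEN iffD1, OF h])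
      (simp add: has_real_derivative_iff_has_vector_derivative)
  from has_vector_derivative_mult[OF has_vector_derivative_of_real_powr[OF p] this]
  show ?thesis
    using p by (subst vector_derivative_at)
      (auto simp: scaleR_conv_of_real of_real_powr_diff_one field_simps power2_eq_square)
qed

lemma vector_derivative_homogeneous_wrt_q:
  assumes h: "h differentiable at (q / p)" and p: "p > 0"
  shows "vector_derivative (\<lambda>t. complex_of_real p powr c * h (t / p)) (at q)
       = complex_of_real p powr (c - 1) * vector_derivative h (at (q / p))"
proof -
  have "((\<lambda>t. t / p) has_real_derivative 1 / p) (at q)"
    using p by (auto intro!: derivative_eq_intros)
  then have "((h \<circ> (\<lambda>t. t / p)) has_vector_derivative (1 / p) *\<^sub>R vector_derivative h (at (q / p))) (at q)"
    by (intro vector_diff_chain_at vector_derivative_works[THEN iffD1, OF h])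
      (simp add: has_real_derivative_iff_has_vector_derivative)
  from has_vector_derivative_mult[OF has_vector_derivative_const this]
  show ?thesis
    using p by (subst vector_derivative_at) (auto simp: scaleR_conv_of_real of_real_powr_diff_one field_simps)
qed

lemma smooth_fun_differentiable: "smooth_fun h \<Longrightarrow> h differentiable at x"
  unfolding smooth_fun_def by (metis differentiableI_vector)

lemma on_S11_differentiable:
  "on_S11 f \<Longrightarrow> fst f differentiable at x \<and> snd f differentiable at x"
  by (simp add: on_S11_def circle_fun_def smooth_fun_differentiable)

lemma dp_lift:
  assumes f: "on_S11 f" and p: "p > 0"
  shows "fst (dp (lift lam f)) p q = complex_of_real p powr (- 2 * lam - 1)
           * (- 2 * lam * fst f (q / p) - complex_of_real (q / p) * vector_derivative (fst f) (at (q / p)))"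
    and "snd (dp (lift lam f)) p q = complex_of_real p powr (- 2 * lam - 2)
           * ((- 2 * lam - 1) * snd f (q / p) - complex_of_real (q / p) * vector_derivative (snd f) (at (q / p)))"
  using on_S11_differentiable[OF f] p
  by (simp_all add: dp_def lift_def vector_derivative_homogeneous_wrt_p diff_diff_add)

lemma dq_lift:
  assumes f: "on_S11 f" and p: "p > 0"
  shows "fst (dq (lift lam f)) p q = complex_of_real p powr (- 2 * lam - 1) * vector_derivative (fst f) (at (q / p))"
    and "snd (dq (lift lam f)) p q = complex_of_real p powr (- 2 * lam - 2) * vector_derivative (snd f) (at (q / p))"
  using on_S11_differentiable[OF f] p
  by (simp_all add: dq_def lift_def vector_derivative_homogeneous_wrt_q diff_diff_add)

lemma euler_lift:
  assumes f: "on_S11 f" and p: "p > 0"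
  shows "fst (euler (lift lam f)) p q = - 2 * lam * fst (lift lam f) p q"
    and "snd (euler (lift lam f)) p q = - 2 * lam * snd (lift lam f) p q"
  unfolding euler_def fst_conv snd_conv dp_lift[OF f p] dq_lift[OF f p]
  using p by (simp_all add: lift_def of_real_powr_diff_one of_real_powr_diff_numeral field_simps power2_eq_square)

text \<open>The derivatives of the lifts must be rewritten before \<open>lift_def\<close> is unfolded, hence
  the two \<open>unfolding\<close> steps. The sign \<open>(-1)\<^sup>s\<close> in the brackets on \<open>S\<^sup>1\<^sup>|\<^sup>1\<close> matches the
  unsigned \<open>\<tau>\<close>-terms on \<open>\<real>\<^sup>2\<^sup>|\<^sup>1\<close> only when \<open>f\<close> has parity \<open>s\<close>, hence the case split.\<close>

lemma lift_sbracket: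
  assumes f: "on_S11 f" and g: "on_S11 g" and hom: "homogeneous f s" and p: "p > 0"
  shows "at_point (lift (lam + mu + 1) (sbracket lam mu s f g)) p q
       = at_point (sscale3 (1/2) (poisson (lift lam f) (lift mu g))) p q"
proof -
  from hom consider "s = 0" "snd f = (\<lambda>x. 0)" | "s = 1" "fst f = (\<lambda>x. 0)"
    unfolding homogeneous_def by blast
  then show ?thesis
    unfolding at_point_def poisson_def sadd3_def sscale3_def smult3_def fst_conv snd_conv
      dp_lift[OF f p] dp_lift[OF g p] dq_lift[OF f p] dq_lift[OF g p]
    unfolding lift_def dtau_def sbracket_def sadd_def sscale_def smult_def sdx_def Dbar_def fst_conv snd_conv
      of_real_powr_weight_add[OF p] of_real_powr_diff_one[OF p] of_real_powr_diff_numeral[OF p]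
    using p by cases (simp_all add: field_simps power2_eq_square)
qed

lemma lift_sbracket_half:
  assumes f: "on_S11 f" and g: "on_S11 g" and hom: "homogeneous f s" and p: "p > 0"
  shows "at_point (lift (lam + mu + 1/2) (sbracket_half lam mu s f g)) p q
       = at_point (sscale3 (- 1/2) (ghost_poisson s (lift lam f) (lift mu g))) p q"
proof -
  from hom consider "s = 0" "snd f = (\<lambda>x. 0)" | "s = 1" "fst f = (\<lambda>x. 0)"
    unfolding homogeneous_def by blast
  then show ?thesis
    unfolding at_point_def ghost_poisson_def sadd3_def sscale3_def smult3_def tau_mult_def fst_conv snd_conv
      dp_lift[OF f p] dp_lift[OF g p] dq_lift[OF f p] dq_lift[OF g p] euler_lift[OF f p] euler_lift[OF g p]
    unfolding lift_def dtau_def sbracket_half_def sadd_def sscale_def smult_def sdx_def Dbar_def fst_conv snd_conv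
      of_real_powr_weight_add[OF p] of_real_powr_diff_one[OF p] of_real_powr_diff_numeral[OF p]
    using p by cases (simp_all add: field_simps power2_eq_square)
qed

theorem proposition3p1:
  fixes lam mu :: complex and f g :: sfun and s :: nat
  assumes "on_S11 f" and "on_S11 g" and "homogeneous f s"
  shows "(\<forall>p q. p > 0 \<longrightarrow>
           at_point (lift (lam + mu + 1) (sbracket lam mu s f g)) p q
             = at_point (sscale3 (1/2) (poisson (lift lam f) (lift mu g))) p q)
       \<and> (\<forall>p q. p > 0 \<longrightarrow>
           at_point (lift (lam + mu + 1/2) (sbracket_half lam mu s f g)) p q
             = at_point (sscale3 (- 1/2) (ghost_poisson s (lift lam f) (lift mu g))) p q)"
  using lift_sbracket[OF assms] lift_sbracket_half[OF assms] by blast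

end
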